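(* For general parameters $a_j,b_j,c_j$, consider the following four elements of $G_1$, each of which has isolated fixed points on $T$: $k_{10}=[-1,1,1,-1,1,-1,1]$, $k_{11}=[-1,1,1,1,-1,1,-1]$, $k_{12}=[1,1,-1,-1,1,1,-1]$, $k_{13}=[1,1,-1,1,-1,-1,1]$. Then each of $k_{11},k_{12},k_{13}$ has fixed points lying on the base locus of the pencil $\{\hat X_\lambda\}_{\lambda}$ (i.e. on $\bigcap_\lambda\hat X_\lambda$), whereas no fixed point of $k_{10}$ lies on this base locus.
   Context: Setup (quadric model). Let $a_1,a_2,a_3,b_1,b_2,b_3,c_1,c_2,c_3\in\mathbb C$ be general, so that the following three curves are smooth elliptic curves: $E_1=\{(x_0:x_1:x_2:x_3)\in\mathbb P^3: x_1^2+x_2^2+x_3^2=0,\ x_0^2=a_1x_1^2+a_2x_2^2+a_3x_3^2\}$, $E_2=\{(u_0:u_1:u_2:u_3)\in\mathbb P^3: u_1^2+u_2^2+u_3^2=0,\ u_0^2=b_1u_1^2+b_2u_2^2+b_3u_3^2\}$, $E_3=\{(z_0:z_1:z_2:z_3)\in\mathbb P^3: z_1^2+z_2^2+z_3^2=0,\ z_0^2=c_1z_1^2+c_2z_2^2+c_3z_3^2\}$. Let $T=E_1\times E_2\times E_3$, $\pi':T\to P_1:=C_1\times C_2\times C_3$ forgetting $x_0,u_0,z_0$ ($C_j\subset\mathbb P^2$ the conics $x_1^2+x_2^2+x_3^2=0$ etc.), with $C_j\cong\mathbb P^1$ via $(s_1:t_1)=(x_1+ix_2:x_3)=(-x_3:x_1-ix_2)$,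 $(s_2:t_2)=(u_1+iu_2:u_3)=(-u_3:u_1-iu_2)$, $(s_3:t_3)=(z_1+iz_2:z_3)=(-z_3:z_1-iz_2)$. For $\lambda\in\mathbb C$, $Y_\lambda=\{s_1s_2s_3=\lambda t_1t_2t_3\}\subset P_1$ and $\hat X_\lambda=\pi'^{-1}(Y_\lambda)$, a pencil of surfaces in $T$. For $\epsilon_0,\eta_1,\epsilon_1,\eta_0,\epsilon_2,\zeta_0,\epsilon_3\in\{\pm1\}$ with $\epsilon_1\epsilon_2\epsilon_3=1$, $[\epsilon_0,\eta_1,\epsilon_1,\eta_0,\epsilon_2,\zeta_0,\epsilon_3]$ denotes the automorphism of $T$: $(x_0:x_1:x_2:x_3)\mapsto(\epsilon_0x_0:\eta_1x_1:x_2:\epsilon_1x_3)$, $(u_0:u_1:u_2:u_3)\mapsto(\eta_0u_0:\eta_1u_1:u_2:\epsilon_2u_3)$, $(z_0:z_1:z_2:z_3)\mapsto(\zeta_0z_0:\eta_1z_1:z_2:\epsilon_3z_3)$; $G_1$ is the group of those with $\eta_1=1$. *)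

theory Defs
  imports Complex_Main
begin

text \<open>Points of P^3 are represented by nonzero vectors of C^4 (homogeneous
coordinates); two representatives give the same projective point iff proportional.\<close>

type_synonym hpt = "complex \<times> complex \<times> complex \<times> complex"

definition proj_eq :: "hpt \<Rightarrow> hpt \<Rightarrow> bool" where
  "proj_eq v w \<longleftrightarrow> (\<exists>c. c \<noteq> 0 \<and>
     (case v of (v0,v1,v2,v3) \<Rightarrow> case w of (w0,w1,w2,w3) \<Rightarrow>
        v0 = c*w0 \<and> v1 = c*w1 \<and> v2 = c*w2 \<and> v3 = c*w3))"

text \<open>Affine cone (minus 0) over the curve
  {x1^2+x2^2+x3^2 = 0, x0^2 = a1 x1^2 + a2 x2^2 + a3 x3^2} in P^3.\<close>
definition ellC :: "complex \<Rightarrow> complex \<Rightarrow> complex \<Rightarrow> hpt set" where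
  "ellC a1 a2 a3 = {(x0,x1,x2,x3). (x0,x1,x2,x3) \<noteq> (0,0,0,0) \<and>
      x1^2 + x2^2 + x3^2 = 0 \<and> x0^2 = a1*x1^2 + a2*x2^2 + a3*x3^2}"

text \<open>Smoothness of this complete intersection: at every point the gradients of the
  two defining quadrics F = x1^2+x2^2+x3^2 and H = x0^2 - a1 x1^2 - a2 x2^2 - a3 x3^2
  are linearly independent.\<close>
definition ell_smooth :: "complex \<Rightarrow> complex \<Rightarrow> complex \<Rightarrow> bool" where
  "ell_smooth a1 a2 a3 \<longleftrightarrow> (\<forall>x0 x1 x2 x3. (x0,x1,x2,x3) \<in> ellC a1 a2 a3 \<longrightarrow>
     (\<forall>\<alpha> \<beta>. (\<alpha> * 0 + \<beta> * (2*x0) = 0 \<and>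
               \<alpha> * (2*x1) + \<beta> * (-2*a1*x1) = 0 \<and>
               \<alpha> * (2*x2) + \<beta> * (-2*a2*x2) = 0 \<and>
               \<alpha> * (2*x3) + \<beta> * (-2*a3*x3) = 0) \<longrightarrow> \<alpha> = 0 \<and> \<beta> = 0))"

type_synonym tpt = "hpt \<times> hpt \<times> hpt"

definition Tset :: "complex \<Rightarrow> complex \<Rightarrow> complex \<Rightarrow> complex \<Rightarrow> complex \<Rightarrow> complex \<Rightarrow>
    complex \<Rightarrow> complex \<Rightarrow> complex \<Rightarrow> tpt set" where
  "Tset a1 a2 a3 b1 b2 b3 c1 c2 c3 = ellC a1 a2 a3 \<times> ellC b1 b2 b3 \<times> ellC c1 c2 c3"

definition proj_eq3 :: "tpt \<Rightarrow> tpt \<Rightarrow> bool" where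
  "proj_eq3 p q \<longleftrightarrow> proj_eq (fst p) (fst q) \<and> proj_eq (fst (snd p)) (fst (snd q))
      \<and> proj_eq (snd (snd p)) (snd (snd q))"

text \<open>The automorphism [e0,h1,e1,h0,e2,z0,e3] of T (signs given as complex numbers \<plusminus>1).\<close>
definition autT :: "complex \<Rightarrow> complex \<Rightarrow> complex \<Rightarrow> complex \<Rightarrow> complex \<Rightarrow> complex \<Rightarrow> complex
    \<Rightarrow> tpt \<Rightarrow> tpt" where
  "autT e0 h1 e1 h0 e2 z0 e3 p = (case p of ((x0,x1,x2,x3),(u0,u1,u2,u3),(w0,w1,w2,w3)) \<Rightarrow>
     ((e0*x0, h1*x1, x2, e1*x3), (h0*u0, h1*u1, u2, e2*u3), (z0*w0, h1*w1, w2, e3*w3)))"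

text \<open>Coordinate (s:t) on the conic C_j = P^1, given by (x1 + i x2 : x3) = (-x3 : x1 - i x2);
  we choose whichever representative is nonzero.\<close>
definition st :: "hpt \<Rightarrow> complex \<times> complex" where
  "st x = (case x of (x0,x1,x2,x3) \<Rightarrow>
     if x1 + \<i>*x2 \<noteq> 0 \<or> x3 \<noteq> 0 then (x1 + \<i>*x2, x3) else (-x3, x1 - \<i>*x2))"

definition Xhat :: "complex \<Rightarrow> complex \<Rightarrow> complex \<Rightarrow> complex \<Rightarrow> complex \<Rightarrow> complex \<Rightarrow>
    complex \<Rightarrow> complex \<Rightarrow> complex \<Rightarrow> complex \<Rightarrow> tpt set" where
  "Xhat a1 a2 a3 b1 b2 b3 c1 c2 c3 lam = {p \<in> Tset a1 a2 a3 b1 b2 b3 c1 c2 c3.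
      fst (st (fst p)) * fst (st (fst (snd p))) * fst (st (snd (snd p)))
      = lam * (snd (st (fst p)) * snd (st (fst (snd p))) * snd (st (snd (snd p))))}"

definition base_locus :: "complex \<Rightarrow> complex \<Rightarrow> complex \<Rightarrow> complex \<Rightarrow> complex \<Rightarrow> complex \<Rightarrow>
    complex \<Rightarrow> complex \<Rightarrow> complex \<Rightarrow> tpt set" where
  "base_locus a1 a2 a3 b1 b2 b3 c1 c2 c3 = (\<Inter>lam. Xhat a1 a2 a3 b1 b2 b3 c1 c2 c3 lam)"

definition fixT :: "tpt set \<Rightarrow> (tpt \<Rightarrow> tpt) \<Rightarrow> tpt set" where
  "fixT T g = {p \<in> T. proj_eq3 (g p) p}"

text \<open>Isolated fixed points: the fixed locus is a finite set of points of
  P^3 x P^3 x P^3, i.e. finite up to proportionality.\<close>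
definition finite_proj :: "tpt set \<Rightarrow> bool" where
  "finite_proj S \<longleftrightarrow> (\<exists>F. finite F \<and> (\<forall>p\<in>S. \<exists>q\<in>F. proj_eq3 p q))"

end

theory Submission imports Defs begin

text \<open>
  Every automorphism k = [e0,1,e1,h0,e2,z0,e3] of G1 acts factorwise on T = E1 x E2 x E3,
  on each curve by a diagonal map diag(e,1,1,f).  For (e,f) = (-1,1) the fixed points on a
  smooth curve are its four points on the plane x0 = 0, for (e,f) = (1,-1) its four points on
  the plane x3 = 0; so k has isolated fixed points as soon as every factor is of one of these
  two types, which covers k10, ..., k13.

  The base locus of the pencil consists of the points of T where both s1 s2 s3 and t1 t2 t3
  vanish.  On a curve point with x0 = 0 the coordinate s never vanishes (smoothness forces
  a1, a2, a3 distinct); since k10 acts by the first type on all three factors, no fixed point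
  of k10 is on the base locus.  Each of k11, k12, k13 has two factors of the second type,
  and the plane x3 = 0 contains a point with s = 0 and a point with t = 0; together with a
  point on x0 = 0 in the remaining factor this gives a fixed point on the base locus.
\<close>

section \<open>Square roots and smooth curves\<close>

definition sqrts :: "complex \<Rightarrow> complex set" where
  "sqrts w = {csqrt w, - csqrt w}"

lemma finite_sqrts: "finite (sqrts w)"
  by (simp add: sqrts_def)

lemma in_sqrts: "y^2 = w \<Longrightarrow> y \<in> sqrts w"
proof -
  assume h: "y^2 = w"
  have "(y - csqrt w) * (y + csqrt w) = 0"
    using h by (simp add: algebra_simps power2_eq_square[symmetric])
  then show ?thesis unfolding sqrts_def by (auto simp: eq_neg_iff_add_eq_0)
qed

text \<open>Smoothness of E forces distinct coefficients: if a_i = a_j, the point with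
  x_i = 1, x_j = i and all other coordinates 0 is a singular point.\<close>
lemma smooth_distinct:
  assumes "ell_smooth a1 a2 a3" shows "a1 \<noteq> a2" "a1 \<noteq> a3" "a2 \<noteq> a3"
proof -
  have sing: "\<beta> = 0" if "(x0,x1,x2,x3) \<in> ellC a1 a2 a3"
    "\<alpha> * 0 + \<beta> * (2*x0) = 0" "\<alpha> * (2*x1) + \<beta> * (-2*a1*x1) = 0"
    "\<alpha> * (2*x2) + \<beta> * (-2*a2*x2) = 0" "\<alpha> * (2*x3) + \<beta> * (-2*a3*x3) = 0"
    for x0 x1 x2 x3 \<alpha> \<beta>
    using assms that unfolding ell_smooth_def by blast
  show "a1 \<noteq> a2"
  proof
    assume "a1 = a2"
    then have "(0,1,\<i>,0) \<in> ellC a1 a2 a3" by (simp add: ellC_def power2_eq_square)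
    from sing[OF this, of a1 1] \<open>a1 = a2\<close> show False by simp
  qed
  show "a1 \<noteq> a3"
  proof
    assume "a1 = a3"
    then have "(0,1,0,\<i>) \<in> ellC a1 a2 a3" by (simp add: ellC_def power2_eq_square)
    from sing[OF this, of a1 1] \<open>a1 = a3\<close> show False by simp
  qed
  show "a2 \<noteq> a3"
  proof
    assume "a2 = a3"
    then have "(0,0,1,\<i>) \<in> ellC a1 a2 a3" by (simp add: ellC_def power2_eq_square)
    from sing[OF this, of a2 1] \<open>a2 = a3\<close> show False by simp
  qed
qed

lemma proj_eq_refl: "proj_eq v v"
  unfolding proj_eq_def by (cases v) (auto intro: exI[of _ 1])

section \<open>Plane sections of a curve\<close>

text \<open>Representatives of the four points of E on the plane x0 = 0, normalised by x1 = 1.\<close>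
definition plane0_pts :: "complex \<Rightarrow> complex \<Rightarrow> complex \<Rightarrow> hpt set" where
  "plane0_pts a1 a2 a3 =
     {0} \<times> {1} \<times> sqrts ((a3-a1)/(a2-a3)) \<times> sqrts (-1 - (a3-a1)/(a2-a3))"

text \<open>Representatives of the four points of E on the plane x3 = 0, normalised by x1 = 1.\<close>
definition plane3_pts :: "complex \<Rightarrow> complex \<Rightarrow> complex \<Rightarrow> hpt set" where
  "plane3_pts a1 a2 a3 = sqrts (a1-a2) \<times> {1} \<times> sqrts (-1) \<times> {0}"

text \<open>On the plane x0 = 0 the two quadrics give (a1-a3) x1^2 + (a2-a3) x2^2 = 0, so x1 \<noteq> 0
  and the ratios x2/x1, x3/x1 are determined up to sign.\<close>
lemma plane0_section:
  assumes sm: "ell_smooth a1 a2 a3" and v: "(0,x1,x2,x3) \<in> ellC a1 a2 a3"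
  shows "\<exists>q\<in>plane0_pts a1 a2 a3. proj_eq (0,x1,x2,x3) q"
proof -
  note d = smooth_distinct[OF sm]
  from v have nz: "(x1,x2,x3) \<noteq> (0,0,0)" and e1: "x1^2 + x2^2 + x3^2 = 0"
    and e2: "0 = a1*x1^2 + a2*x2^2 + a3*x3^2" by (auto simp: ellC_def)
  have x3sq: "x3^2 = -(x1^2+x2^2)"
    using e1 by (simp add: algebra_simps eq_neg_iff_add_eq_0)
  have lin: "(a1-a3)*x1^2 + (a2-a3)*x2^2 = 0"
    using e2 unfolding x3sq by (simp add: algebra_simps)
  have x1: "x1 \<noteq> 0"
  proof
    assume "x1 = 0"
    with lin d have "x2 = 0" by simp
    with \<open>x1 = 0\<close> e1 nz show False by simp
  qed
  have x2sq: "x2^2 = (a3-a1)/(a2-a3) * x1^2"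
    using lin d by (simp add: field_simps)
  have "(x2/x1)^2 = (a3-a1)/(a2-a3)"
    using x2sq x1 by (simp add: power_divide)
  moreover have "(x3/x1)^2 = -1 - (a3-a1)/(a2-a3)"
    using x3sq x2sq x1 by (simp add: power_divide field_simps)
  ultimately have "(0, 1, x2/x1, x3/x1) \<in> plane0_pts a1 a2 a3"
    by (simp add: plane0_pts_def in_sqrts)
  moreover have "proj_eq (0,x1,x2,x3) (0, 1, x2/x1, x3/x1)"
    unfolding proj_eq_def using x1 by (intro exI[of _ x1]) simp
  ultimately show ?thesis by blast
qed

text \<open>On the plane x3 = 0 we get x2^2 = -x1^2 and x0^2 = (a1-a2) x1^2.\<close>
lemma plane3_section:
  assumes v: "(x0,x1,x2,0) \<in> ellC a1 a2 a3"
  shows "\<exists>q\<in>plane3_pts a1 a2 a3. proj_eq (x0,x1,x2,0) q"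
proof -
  from v have nz: "(x0,x1,x2) \<noteq> (0,0,0)" and e1: "x1^2 + x2^2 = 0"
    and e2: "x0^2 = a1*x1^2 + a2*x2^2" by (auto simp: ellC_def)
  have x2sq: "x2^2 = -1 * x1^2"
    using e1 by (simp add: algebra_simps eq_neg_iff_add_eq_0)
  have x1: "x1 \<noteq> 0"
  proof
    assume "x1 = 0"
    with x2sq have "x2 = 0" by simp
    with \<open>x1 = 0\<close> e2 nz show False by simp
  qed
  have "(x2/x1)^2 = -1"
    using x2sq x1 by (simp add: power_divide)
  moreover have "(x0/x1)^2 = a1 - a2"
    using e2 x2sq x1 by (simp add: power_divide field_simps)
  ultimately have "(x0/x1, 1, x2/x1, 0) \<in> plane3_pts a1 a2 a3"
    by (simp add: plane3_pts_def in_sqrts)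
  moreover have "proj_eq (x0,x1,x2,0) (x0/x1, 1, x2/x1, 0)"
    unfolding proj_eq_def using x1 by (intro exI[of _ x1]) simp
  ultimately show ?thesis by blast
qed

text \<open>At a curve point on the plane x0 = 0 the conic coordinate s is nonzero: s = 0 would
  force x1 + i x2 = 0 and then x3 = 0, i.e. x2 = i x1, and then the second quadric gives
  (a1 - a2) x1^2 = 0.\<close>
lemma s_nonzero_on_plane0:
  assumes sm: "ell_smooth a1 a2 a3" and v: "(0,x1,x2,x3) \<in> ellC a1 a2 a3"
  shows "fst (st (0,x1,x2,x3)) \<noteq> 0"
proof -
  from v have nz: "(x1,x2,x3) \<noteq> (0,0,0)" and e1: "x1^2 + x2^2 + x3^2 = 0"
    and e2: "0 = a1*x1^2 + a2*x2^2 + a3*x3^2" by (auto simp: ellC_def)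
  have fac: "x1^2 + x2^2 = (x1 + \<i>*x2) * (x1 - \<i>*x2)"
    by (simp add: algebra_simps power2_eq_square)
  show ?thesis
  proof (cases "x1 + \<i>*x2 \<noteq> 0 \<or> x3 \<noteq> 0")
    case True
    show ?thesis
    proof
      assume "fst (st (0,x1,x2,x3)) = 0"
      with True have "x1 + \<i>*x2 = 0" by (simp add: st_def)
      with e1 fac have "x3 = 0" by simp
      with True \<open>x1 + \<i>*x2 = 0\<close> show False by simp
    qed
  next
    case False
    then have x3: "x3 = 0" and "x1 = -\<i>*x2" by (auto simp: eq_neg_iff_add_eq_0)
    then have x2: "x2 = \<i>*x1" by simp
    then have "x2^2 = -(x1^2)" by (simp add: power_mult_distrib)
    with e2 x3 have "(a1 - a2) * x1^2 = 0" by (auto simp: algebra_simps)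
    with smooth_distinct(1)[OF sm] have "x1 = 0" by simp
    with nz x2 x3 show ?thesis by simp
  qed
qed

section \<open>Fixed points of the diagonal involutions\<close>

definition diag :: "complex \<Rightarrow> complex \<Rightarrow> hpt \<Rightarrow> hpt" where
  "diag e f v = (case v of (x0,x1,x2,x3) \<Rightarrow> (e*x0, x1, x2, f*x3))"

definition fix_curve :: "hpt set \<Rightarrow> (hpt \<Rightarrow> hpt) \<Rightarrow> hpt set" where
  "fix_curve E g = {v \<in> E. proj_eq (g v) v}"

definition finite_proj1 :: "hpt set \<Rightarrow> bool" where
  "finite_proj1 S \<longleftrightarrow> (\<exists>F. finite F \<and> (\<forall>v\<in>S. \<exists>q\<in>F. proj_eq v q))"

lemma autT_factorwise:
  "autT e0 1 e1 h0 e2 z0 e3 (x, u, w) = (diag e0 e1 x, diag h0 e2 u, diag z0 e3 w)"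
  by (cases x; cases u; cases w) (simp add: autT_def diag_def)

lemma fixT_factorwise:
  "p \<in> fixT (Tset a1 a2 a3 b1 b2 b3 c1 c2 c3) (autT e0 1 e1 h0 e2 z0 e3) \<longleftrightarrow>
     fst p \<in> fix_curve (ellC a1 a2 a3) (diag e0 e1) \<and>
     fst (snd p) \<in> fix_curve (ellC b1 b2 b3) (diag h0 e2) \<and>
     snd (snd p) \<in> fix_curve (ellC c1 c2 c3) (diag z0 e3)"
  by (cases p) (auto simp: fixT_def Tset_def proj_eq3_def autT_factorwise fix_curve_def)

text \<open>A curve point proportional to its image under diag(e,1,1,f) is in fact fixed exactly:
  a proportionality factor c \<noteq> 1 would force x1 = x2 = 0, hence x3 = 0 by the conic and
  x0 = 0 by the second quadric.\<close>
lemma fixed_diag_exact: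
  assumes fixed: "(x0,x1,x2,x3) \<in> fix_curve (ellC a1 a2 a3) (diag e f)"
  shows "e*x0 = x0" "f*x3 = x3"
proof -
  have v: "(x0,x1,x2,x3) \<in> ellC a1 a2 a3"
    using fixed by (simp add: fix_curve_def)
  have "proj_eq (e*x0, x1, x2, f*x3) (x0,x1,x2,x3)"
    using fixed by (simp add: fix_curve_def diag_def)
  then obtain c where c: "e*x0 = c*x0" "x1 = c*x1" "x2 = c*x2" "f*x3 = c*x3"
    unfolding proj_eq_def prod.case by (elim exE conjE) (rule that; assumption)
  have "c = 1"
  proof (rule ccontr)
    assume "c \<noteq> 1"
    with c have "x1 = 0" "x2 = 0" by simp_all
    with v have "x3 = 0" by (simp add: ellC_def)
    with v \<open>x1 = 0\<close> \<open>x2 = 0\<close> show False by (simp add: ellC_def)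
  qed
  with c show "e*x0 = x0" "f*x3 = x3" by simp_all
qed

lemma fixed_diag_x0:
  assumes "(x0,x1,x2,x3) \<in> fix_curve (ellC a1 a2 a3) (diag e f)" and "e \<noteq> 1"
  shows "x0 = 0"
  using fixed_diag_exact(1)[OF assms(1)] assms(2) by simp

lemma fixed_diag_x3:
  assumes "(x0,x1,x2,x3) \<in> fix_curve (ellC a1 a2 a3) (diag e f)" and "f \<noteq> 1"
  shows "x3 = 0"
  using fixed_diag_exact(2)[OF assms(1)] assms(2) by simp

definition isolated_type :: "complex \<times> complex \<Rightarrow> bool" where
  "isolated_type ef \<longleftrightarrow> ef = (-1, 1) \<or> ef = (1, -1)"

text \<open>For either type the fixed points lie on a plane section, hence are finitely many.\<close>
lemma fix_curve_finite:
  assumes sm: "ell_smooth a1 a2 a3" and ty: "isolated_type (e, f)"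
  shows "finite_proj1 (fix_curve (ellC a1 a2 a3) (diag e f))"
proof -
  define F where "F = (if e = 1 then plane3_pts a1 a2 a3 else plane0_pts a1 a2 a3)"
  have "finite F"
    by (simp add: F_def plane0_pts_def plane3_pts_def finite_sqrts)
  moreover have "\<exists>q\<in>F. proj_eq v q" if fixed: "v \<in> fix_curve (ellC a1 a2 a3) (diag e f)" for v
  proof (cases v)
    case (fields x0 x1 x2 x3)
    with fixed have v: "(x0,x1,x2,x3) \<in> ellC a1 a2 a3" by (simp add: fix_curve_def)
    show ?thesis
    proof (cases "e = 1")
      case True
      with ty have "x3 = 0"
        using fixed_diag_x3[of x0 x1 x2 x3] fixed fields by (simp add: isolated_type_def)
      with v fields True show ?thesis using plane3_section[of x0 x1 x2] by (simp add: F_def)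
    next
      case False
      then have "x0 = 0" using fixed_diag_x0[of x0 x1 x2 x3] fixed fields by simp
      with v fields False show ?thesis using plane0_section[OF sm] by (simp add: F_def)
    qed
  qed
  ultimately show ?thesis unfolding finite_proj1_def by blast
qed

lemma finite_proj_product:
  assumes "finite_proj1 S1" "finite_proj1 S2" "finite_proj1 S3"
    and sub: "\<And>p. p \<in> S \<Longrightarrow> fst p \<in> S1 \<and> fst (snd p) \<in> S2 \<and> snd (snd p) \<in> S3"
  shows "finite_proj S"
proof -
  obtain F1 where F1: "finite F1" "\<forall>v\<in>S1. \<exists>q\<in>F1. proj_eq v q"
    using assms(1) unfolding finite_proj1_def by blast
  obtain F2 where F2: "finite F2" "\<forall>v\<in>S2. \<exists>q\<in>F2. proj_eq v q"
    using assms(2) unfolding finite_proj1_def by blast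
  obtain F3 where F3: "finite F3" "\<forall>v\<in>S3. \<exists>q\<in>F3. proj_eq v q"
    using assms(3) unfolding finite_proj1_def by blast
  have "\<exists>q\<in>F1 \<times> F2 \<times> F3. proj_eq3 p q" if "p \<in> S" for p
  proof -
    from sub[OF that] F1(2) F2(2) F3(2) obtain q1 q2 q3
      where "q1 \<in> F1" "q2 \<in> F2" "q3 \<in> F3"
        and "proj_eq (fst p) q1" "proj_eq (fst (snd p)) q2" "proj_eq (snd (snd p)) q3"
      by blast
    then show ?thesis unfolding proj_eq3_def by (intro bexI[of _ "(q1,q2,q3)"]) auto
  qed
  moreover have "finite (F1 \<times> F2 \<times> F3)"
    using F1(1) F2(1) F3(1) by simp
  ultimately show ?thesis unfolding finite_proj_def by blast
qed

theorem fixT_finite: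
  assumes "ell_smooth a1 a2 a3" "ell_smooth b1 b2 b3" "ell_smooth c1 c2 c3"
    and "isolated_type (e0, e1)" "isolated_type (h0, e2)" "isolated_type (z0, e3)"
  shows "finite_proj (fixT (Tset a1 a2 a3 b1 b2 b3 c1 c2 c3) (autT e0 1 e1 h0 e2 z0 e3))"
  by (rule finite_proj_product[OF fix_curve_finite[OF assms(1,4)]
        fix_curve_finite[OF assms(2,5)] fix_curve_finite[OF assms(3,6)]])
    (simp add: fixT_factorwise)

section \<open>The base locus of the pencil\<close>

definition s_prod :: "tpt \<Rightarrow> complex" where
  "s_prod p = fst (st (fst p)) * fst (st (fst (snd p))) * fst (st (snd (snd p)))"

definition t_prod :: "tpt \<Rightarrow> complex" where
  "t_prod p = snd (st (fst p)) * snd (st (fst (snd p))) * snd (st (snd (snd p)))"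

lemma Xhat_iff:
  "p \<in> Xhat a1 a2 a3 b1 b2 b3 c1 c2 c3 lam \<longleftrightarrow>
     p \<in> Tset a1 a2 a3 b1 b2 b3 c1 c2 c3 \<and> s_prod p = lam * t_prod p"
  unfolding Xhat_def s_prod_def t_prod_def by (rule mem_Collect_eq)

text \<open>The base locus is where both s1 s2 s3 and t1 t2 t3 vanish: the members \<lambda> = 0 and
  \<lambda> = 1 of the pencil already cut it out.\<close>
lemma base_locus_iff:
  "p \<in> base_locus a1 a2 a3 b1 b2 b3 c1 c2 c3 \<longleftrightarrow>
     p \<in> Tset a1 a2 a3 b1 b2 b3 c1 c2 c3 \<and> s_prod p = 0 \<and> t_prod p = 0"
proof
  assume "p \<in> base_locus a1 a2 a3 b1 b2 b3 c1 c2 c3"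
  then have "p \<in> Xhat a1 a2 a3 b1 b2 b3 c1 c2 c3 0" "p \<in> Xhat a1 a2 a3 b1 b2 b3 c1 c2 c3 1"
    unfolding base_locus_def by (rule INT_D[OF _ UNIV_I])+
  then show "p \<in> Tset a1 a2 a3 b1 b2 b3 c1 c2 c3 \<and> s_prod p = 0 \<and> t_prod p = 0"
    by (simp add: Xhat_iff)
qed (simp add: base_locus_def Xhat_iff)

lemma fixed_base_point:
  assumes "p \<in> Tset a1 a2 a3 b1 b2 b3 c1 c2 c3" "g p = p" "s_prod p = 0" "t_prod p = 0"
  shows "fixT (Tset a1 a2 a3 b1 b2 b3 c1 c2 c3) g \<inter> base_locus a1 a2 a3 b1 b2 b3 c1 c2 c3 \<noteq> {}"
proof -
  have "p \<in> fixT (Tset a1 a2 a3 b1 b2 b3 c1 c2 c3) g"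
    using assms(1,2) by (simp add: fixT_def proj_eq3_def proj_eq_refl)
  moreover have "p \<in> base_locus a1 a2 a3 b1 b2 b3 c1 c2 c3"
    using assms(1,3,4) by (simp add: base_locus_iff)
  ultimately show ?thesis by blast
qed

text \<open>Points of E: one on the plane x0 = 0, and two on x3 = 0 with s = 0 resp. t = 0.\<close>
definition pt_x0 :: "complex \<Rightarrow> complex \<Rightarrow> complex \<Rightarrow> hpt" where
  "pt_x0 a1 a2 a3 = (0, csqrt (a2-a3), csqrt (a3-a1), csqrt (a1-a2))"
definition pt_s0 :: "complex \<Rightarrow> complex \<Rightarrow> hpt" where
  "pt_s0 a1 a2 = (csqrt (a1-a2), 1, \<i>, 0)"
definition pt_t0 :: "complex \<Rightarrow> complex \<Rightarrow> hpt" where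
  "pt_t0 a1 a2 = (csqrt (a1-a2), 1, -\<i>, 0)"

lemma pt_x0_in: "ell_smooth a1 a2 a3 \<Longrightarrow> pt_x0 a1 a2 a3 \<in> ellC a1 a2 a3"
  using smooth_distinct[of a1 a2 a3] unfolding pt_x0_def ellC_def
  by (simp add: algebra_simps)
lemma pt_s0_in: "pt_s0 a1 a2 \<in> ellC a1 a2 a3"
  unfolding pt_s0_def ellC_def by (simp add: power2_eq_square power2_csqrt[unfolded power2_eq_square])
lemma pt_t0_in: "pt_t0 a1 a2 \<in> ellC a1 a2 a3"
  unfolding pt_t0_def ellC_def by (simp add: power2_eq_square power2_csqrt[unfolded power2_eq_square])

lemma diag_fixes_pts:
  "diag e 1 (pt_x0 a1 a2 a3) = pt_x0 a1 a2 a3"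
  "diag 1 f (pt_s0 a1 a2) = pt_s0 a1 a2" "diag 1 f (pt_t0 a1 a2) = pt_t0 a1 a2"
  by (simp_all add: diag_def pt_x0_def pt_s0_def pt_t0_def)

lemma st_pts: "fst (st (pt_s0 a1 a2)) = 0" "snd (st (pt_t0 a1 a2)) = 0"
  by (simp_all add: st_def pt_s0_def pt_t0_def)

text \<open>If an element of G1 acts by diag(e,1,1,f) with e \<noteq> 1 on every factor, none of its
  fixed points lies on the base locus, since s1 s2 s3 \<noteq> 0 there.\<close>
theorem fixT_off_base_locus:
  assumes sm: "ell_smooth a1 a2 a3" "ell_smooth b1 b2 b3" "ell_smooth c1 c2 c3"
    and e: "e0 \<noteq> 1" "h0 \<noteq> 1" "z0 \<noteq> 1"
  shows "fixT (Tset a1 a2 a3 b1 b2 b3 c1 c2 c3) (autT e0 1 e1 h0 e2 z0 e3)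
           \<inter> base_locus a1 a2 a3 b1 b2 b3 c1 c2 c3 = {}"
proof -
  have s_nz: "fst (st v) \<noteq> 0" if "v \<in> fix_curve (ellC a1 a2 a3) (diag e f)" "e \<noteq> 1"
    "ell_smooth a1 a2 a3" for v a1 a2 a3 e f
  proof (cases v)
    case (fields x0 x1 x2 x3)
    with that have "x0 = 0" using fixed_diag_x0 by blast
    with that fields show ?thesis using s_nonzero_on_plane0 by (simp add: fix_curve_def)
  qed
  have "s_prod p \<noteq> 0"
    if "p \<in> fixT (Tset a1 a2 a3 b1 b2 b3 c1 c2 c3) (autT e0 1 e1 h0 e2 z0 e3)" for p
  proof -
    from that have "fst p \<in> fix_curve (ellC a1 a2 a3) (diag e0 e1)"
      and "fst (snd p) \<in> fix_curve (ellC b1 b2 b3) (diag h0 e2)"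
      and "snd (snd p) \<in> fix_curve (ellC c1 c2 c3) (diag z0 e3)"
      by (simp_all add: fixT_factorwise)
    from s_nz[OF this(1) e(1) sm(1)] s_nz[OF this(2) e(2) sm(2)] s_nz[OF this(3) e(3) sm(3)]
    show ?thesis by (simp add: s_prod_def)
  qed
  then show ?thesis by (auto simp: base_locus_iff)
qed

theorem mainTheorem6:
  fixes a1 a2 a3 b1 b2 b3 c1 c2 c3 :: complex
  assumes "ell_smooth a1 a2 a3" and "ell_smooth b1 b2 b3" and "ell_smooth c1 c2 c3"
  defines "T \<equiv> Tset a1 a2 a3 b1 b2 b3 c1 c2 c3"
    and "B \<equiv> base_locus a1 a2 a3 b1 b2 b3 c1 c2 c3"
    and "k10 \<equiv> autT (-1) 1 1 (-1) 1 (-1) 1"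
    and "k11 \<equiv> autT (-1) 1 1 1 (-1) 1 (-1)"
    and "k12 \<equiv> autT 1 1 (-1) (-1) 1 1 (-1)"
    and "k13 \<equiv> autT 1 1 (-1) 1 (-1) (-1) 1"
  shows "finite_proj (fixT T k10) \<and> finite_proj (fixT T k11) \<and>
         finite_proj (fixT T k12) \<and> finite_proj (fixT T k13) \<and>
         fixT T k11 \<inter> B \<noteq> {} \<and> fixT T k12 \<inter> B \<noteq> {} \<and> fixT T k13 \<inter> B \<noteq> {} \<and>
         fixT T k10 \<inter> B = {}"
proof -
  note pts = pt_x0_in[OF assms(1)] pt_x0_in[OF assms(2)] pt_x0_in[OF assms(3)]
    pt_s0_in pt_t0_in
  have "finite_proj (fixT T k10)" "finite_proj (fixT T k11)"
       "finite_proj (fixT T k12)" "finite_proj (fixT T k13)"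
    unfolding T_def k10_def k11_def k12_def k13_def
    by (simp_all add: fixT_finite assms isolated_type_def)
  moreover have "fixT T k11 \<inter> B \<noteq> {}"
    unfolding T_def B_def k11_def
    by (rule fixed_base_point[of "(pt_x0 a1 a2 a3, pt_s0 b1 b2, pt_t0 c1 c2)"])
      (simp_all add: Tset_def pts autT_factorwise diag_fixes_pts s_prod_def t_prod_def st_pts)
  moreover have "fixT T k12 \<inter> B \<noteq> {}"
    unfolding T_def B_def k12_def
    by (rule fixed_base_point[of "(pt_s0 a1 a2, pt_x0 b1 b2 b3, pt_t0 c1 c2)"])
      (simp_all add: Tset_def pts autT_factorwise diag_fixes_pts s_prod_def t_prod_def st_pts)
  moreover have "fixT T k13 \<inter> B \<noteq> {}"
    unfolding T_def B_def k13_def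
    by (rule fixed_base_point[of "(pt_s0 a1 a2, pt_t0 b1 b2, pt_x0 c1 c2 c3)"])
      (simp_all add: Tset_def pts autT_factorwise diag_fixes_pts s_prod_def t_prod_def st_pts)
  moreover have "fixT T k10 \<inter> B = {}"
    unfolding T_def B_def k10_def by (rule fixT_off_base_locus) (simp_all add: assms)
  ultimately show ?thesis by blast
qed

end
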